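(* Let $S=(s_{ij})_{i,j=1,2}$ be a real invertible $2\times2$ matrix, $\omega\in\mathbb R^2$, $\varepsilon>0$, and $B=\{k\in\mathbb R^2:2|S(k-\omega)|<\varepsilon\}$. Then for $j=1,2$, $$\frac{1}{(2\pi)^2}\lim_{\eta\to0^+}\eta\int_{B}dk\,\frac{\partial_{k_j}^2\big(|S(k-\omega)|\big)}{\eta^2+4|S(k-\omega)|^2}=\frac{s_{1j}^2+s_{2j}^2}{16\,|\det S|}.$$ Consequently, under the hypotheses of the linearization proposition, $\sigma_{jj}=\frac1{16}\sum_{l=1}^n\frac{s_{l,1j}^2+s_{l,2j}^2}{|\det S_l|}$.
   Context: Here $\partial_{k_j}^2|S(k-\omega)|$ is the classical second partial derivative, defined for $k\neq\omega$ (the integrand is integrable near $k=\omega$). In the consequence, $\sigma_{jj}$ is the longitudinal conductivity of a lattice Hamiltonian whose Bloch bands $\Lambda_\pm$ closest to the Fermi energy $\mu$ have conical intersections $\Lambda_\pm(k)=\mu\pm|S_l(k-\omega_l)|+a_l\cdot(k-\omega_l)+o(|k-\omega_l|)$ at the $n$ Fermi points $\omega_l$, and $s_{l,ij}$ is the $(i,j)$ entry of $S_l$; the linearization proposition expresses $\sigma_{jj}=\frac{1}{(2\pi)^2}\sum_{l}\lim_{\eta\to0^+}\eta\int_{2|S_l(k-\omega_l)|<\varepsilon}\frac{\partial_j^2|S_l(k-\omega_l)|}{\eta^2+4|S_l(k-\omega_l)|^2}dk$. *)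

theory Defs
  imports "HOL-Analysis.Analysis"
begin

definition partial2 :: "(real^2 \<Rightarrow> real) \<Rightarrow> 2 \<Rightarrow> real^2 \<Rightarrow> real" where
  "partial2 g j k = deriv (deriv (\<lambda>t. g (k + t *\<^sub>R axis j 1))) 0"

definition lin_integral :: "real^2^2 \<Rightarrow> real^2 \<Rightarrow> real \<Rightarrow> 2 \<Rightarrow> real \<Rightarrow> real" where
  "lin_integral S w \<epsilon> j \<eta> =
     \<eta> * integral {k. 2 * norm (S *v (k - w)) < \<epsilon>}
       (\<lambda>k. partial2 (\<lambda>q. norm (S *v (q - w))) j k / (\<eta>\<^sup>2 + 4 * (norm (S *v (k - w)))\<^sup>2))"

end

theory Submission
  imports Defs
begin

text \<open>
  Substituting \<open>y = S (k - \<omega>)\<close> turns the integral into \<open>1 / \<bar>det S\<bar>\<close> times an integral over the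
  disc \<open>\<bar>y\<bar> < \<epsilon> / 2\<close> of \<open>\<partial>\<^sub>v\<^sup>2 \<bar>y\<bar> / (\<eta>\<^sup>2 + 4 \<bar>y\<bar>\<^sup>2)\<close>, where \<open>v = S e\<^sub>j\<close> and
  \<open>\<partial>\<^sub>v\<^sup>2 \<bar>y\<bar> = (\<bar>y\<bar>\<^sup>2 \<bar>v\<bar>\<^sup>2 - (y \<bullet> v)\<^sup>2) / \<bar>y\<bar>\<^sup>3\<close>. Averaging the integrand with its quarter turn
  replaces the angular factor by \<open>\<bar>v\<bar>\<^sup>2 / 2\<close>, and the radial integral that remains is
  \<open>2 \<pi> \<integral> ds / (\<eta>\<^sup>2 + 4 s\<^sup>2)\<close> over \<open>0 < s < \<epsilon> / 2\<close>, i.e. \<open>\<pi> arctan (\<epsilon> / \<eta>) / \<eta>\<close>. So \<open>\<eta>\<close> times the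
  integral is \<open>\<bar>v\<bar>\<^sup>2 \<pi> arctan (\<epsilon> / \<eta>) / (2 \<bar>det S\<bar>)\<close>, which tends to \<open>\<pi>\<^sup>2 \<bar>v\<bar>\<^sup>2 / (4 \<bar>det S\<bar>)\<close>.
\<close>

section \<open>Affine change of variables\<close>

lemma integral_affine_preimage:
  fixes S :: "real^('n::{finite,wellorder})^'n::_" and F :: "real^'n::_ \<Rightarrow> real"
  assumes S: "invertible S" and T: "T \<in> sets lebesgue" and F: "F absolutely_integrable_on T"
  shows "(\<lambda>k. F (S *v (k - w))) absolutely_integrable_on {k. S *v (k - w) \<in> T}"
    and "integral {k. S *v (k - w) \<in> T} (\<lambda>k. F (S *v (k - w))) = integral T F / \<bar>det S\<bar>"
proof -
  obtain S' where S': "S ** S' = mat 1" "S' ** S = mat 1"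
    using S unfolding invertible_def by blast
  have "\<bar>det S\<bar> * \<bar>det S'\<bar> = 1"
    using arg_cong[OF S'(1), of det] by (simp add: det_mul abs_mult[symmetric])
  then have det: "\<bar>det S'\<bar> = 1 / \<bar>det S\<bar>"
    by (metis mult.commute nonzero_eq_divide_eq mult_zero_left zero_neq_one)
  define h where "h y = w + S' *v y" for y
  have h_inv: "S *v (h y - w) = y" for y
    by (simp add: h_def matrix_vector_mul_assoc S'(1))
  have img: "h ` T = {k. S *v (k - w) \<in> T}"
  proof (intro equalityI subsetI)
    fix k assume "k \<in> {k. S *v (k - w) \<in> T}"
    moreover have "k = h (S *v (k - w))"
      by (simp add: h_def matrix_vector_mul_assoc S'(2))
    ultimately show "k \<in> h ` T" by blast
  qed (auto simp: h_inv)
  have der: "(h has_derivative (*v) S') (at y within T)" for y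
    unfolding h_def by (auto intro!: derivative_eq_intros linear_imp_has_derivative matrix_vector_mul_linear)
  have inj: "inj_on h T"
    by (metis h_inv inj_onI)
  \<comment> \<open>the library theorem is stated for vector-valued integrands; pass through \<open>real^1\<close>\<close>
  have "(\<lambda>k. vec (F (S *v (k - w))) :: real^1) absolutely_integrable_on h ` T \<and>
        integral (h ` T) (\<lambda>k. vec (F (S *v (k - w))) :: real^1) = vec (integral T F / \<bar>det S\<bar>)"
    using F by (subst has_absolute_integral_change_of_variables[OF T der inj, symmetric])
      (simp add: h_inv det absolutely_integrable_on_1_iff integral_on_1_eq
        set_integrable_mult_right vec_eq_iff)
  then show "(\<lambda>k. F (S *v (k - w))) absolutely_integrable_on {k. S *v (k - w) \<in> T}"
    and "integral {k. S *v (k - w) \<in> T} (\<lambda>k. F (S *v (k - w))) = integral T F / \<bar>det S\<bar>"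
    by (simp_all add: img absolutely_integrable_on_1_iff integral_on_1_eq)
qed

section \<open>Radial integrals over annuli\<close>

definition annulus :: "real \<Rightarrow> real \<Rightarrow> (real^2) set" where
  "annulus a b = {y. a < norm y \<and> norm y \<le> b}"

lemma annulus_eq_cball_diff: "annulus a b = cball 0 b - cball 0 a"
  by (auto simp: annulus_def)

lemma lmeasurable_annulus: "annulus a b \<in> lmeasurable"
  unfolding annulus_eq_cball_diff by (intro fmeasurable.Diff) auto

lemma measure_annulus:
  assumes "0 \<le> a" "a \<le> b"
  shows "measure lebesgue (annulus a b) = pi * (b\<^sup>2 - a\<^sup>2)"
proof -
  have "measure lebesgue (cball (0::real^2) r) = r\<^sup>2 * pi" if "0 \<le> r" for r
    using that circle_area[of r 0] by (simp add: content_cball_conv_ball)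
  then show ?thesis
    using assms unfolding annulus_eq_cball_diff
    by (subst measurable_measure_Diff) (auto simp: algebra_simps)
qed

lemma annulus_Un:
  assumes "a \<le> b" "b \<le> c"
  shows "annulus a b \<union> annulus b c = annulus a c" and "annulus a b \<inter> annulus b c = {}"
  using assms by (auto simp: annulus_def)

lemma integral_annulus_radial_bounds:
  fixes f :: "real \<Rightarrow> real"
  assumes cont: "continuous_on {a..b} f" and anti: "antimono_on {a..b} f" and "0 \<le> a" "a \<le> b"
  shows "(\<lambda>y. f (norm y)) integrable_on annulus a b"
    and "f b * (pi * (b\<^sup>2 - a\<^sup>2)) \<le> integral (annulus a b) (\<lambda>y. f (norm y))"
    and "integral (annulus a b) (\<lambda>y. f (norm y)) \<le> f a * (pi * (b\<^sup>2 - a\<^sup>2))"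
proof -
  have range: "f b \<le> f (norm y) \<and> f (norm y) \<le> f a" if "y \<in> annulus a b" for y
    using that anti \<open>a \<le> b\<close> by (auto simp: annulus_def monotone_on_def)
  have "continuous_on (annulus a b) (\<lambda>y. f (norm y))"
    by (rule continuous_on_compose2[OF cont continuous_on_norm_id]) (auto simp: annulus_def)
  then have "(\<lambda>y. f (norm y)) \<in> borel_measurable (lebesgue_on (annulus a b))"
    using lmeasurable_annulus by (intro continuous_imp_measurable_on_sets_lebesgue) auto
  then show int: "(\<lambda>y. f (norm y)) integrable_on annulus a b"
    by (rule measurable_bounded_by_integrable_imp_integrable_real[where g="\<lambda>_. \<bar>f a\<bar> + \<bar>f b\<bar>"])
       (use lmeasurable_annulus integrable_on_const in \<open>auto simp: abs_le_iff dest!: range\<close>)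
  have const: "integral (annulus a b) (\<lambda>_. c) = c * (pi * (b\<^sup>2 - a\<^sup>2))" for c
    using Henstock_Kurzweil_Integration.integral_mult_right[of "annulus a b" c "\<lambda>_. 1"]
      lmeasure_integral[OF lmeasurable_annulus] measure_annulus[OF \<open>0 \<le> a\<close> \<open>a \<le> b\<close>]
    by simp
  have "integral (annulus a b) (\<lambda>_. f b) \<le> integral (annulus a b) (\<lambda>y. f (norm y))"
    by (rule integral_le[OF integrable_on_const[OF lmeasurable_annulus] int]) (use range in blast)
  then show "f b * (pi * (b\<^sup>2 - a\<^sup>2)) \<le> integral (annulus a b) (\<lambda>y. f (norm y))"
    by (simp add: const)
  have "integral (annulus a b) (\<lambda>y. f (norm y)) \<le> integral (annulus a b) (\<lambda>_. f a)"
    by (rule integral_le[OF int integrable_on_const[OF lmeasurable_annulus]]) (use range in blast)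
  then show "integral (annulus a b) (\<lambda>y. f (norm y)) \<le> f a * (pi * (b\<^sup>2 - a\<^sup>2))"
    by (simp add: const)
qed

lemma radial_primitive_bounds:
  fixes f P :: "real \<Rightarrow> real"
  assumes deriv: "\<And>s. s \<in> {a..b} \<Longrightarrow> (P has_real_derivative 2 * pi * s * f s) (at s)"
    and anti: "antimono_on {a..b} f" and "0 \<le> a" "a \<le> b"
  shows "f b * (pi * (b\<^sup>2 - a\<^sup>2)) \<le> P b - P a" and "P b - P a \<le> f a * (pi * (b\<^sup>2 - a\<^sup>2))"
proof -
  have "P a - c * pi * a\<^sup>2 \<le> P b - c * pi * b\<^sup>2"
    if "\<And>s. s \<in> {a..b} \<Longrightarrow> c \<le> f s" for c
  proof (rule DERIV_nonneg_imp_nondecreasing[OF \<open>a \<le> b\<close>])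
    fix s assume "a \<le> s" "s \<le> b"
    then have "((\<lambda>s. P s - c * pi * s\<^sup>2) has_real_derivative 2 * pi * s * (f s - c)) (at s)"
      by (auto intro!: derivative_eq_intros deriv simp: algebra_simps)
    moreover have "0 \<le> 2 * pi * s * (f s - c)"
      using that \<open>a \<le> s\<close> \<open>s \<le> b\<close> \<open>0 \<le> a\<close> by simp
    ultimately show "\<exists>y. ((\<lambda>s. P s - c * pi * s\<^sup>2) has_real_derivative y) (at s) \<and> 0 \<le> y"
      by blast
  qed
  moreover have "P a - c * pi * a\<^sup>2 \<ge> P b - c * pi * b\<^sup>2"
    if "\<And>s. s \<in> {a..b} \<Longrightarrow> f s \<le> c" for c
  proof (rule DERIV_nonpos_imp_nonincreasing[OF \<open>a \<le> b\<close>])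
    fix s assume "a \<le> s" "s \<le> b"
    then have "((\<lambda>s. P s - c * pi * s\<^sup>2) has_real_derivative 2 * pi * s * (f s - c)) (at s)"
      by (auto intro!: derivative_eq_intros deriv simp: algebra_simps)
    moreover have "2 * pi * s * (f s - c) \<le> 0"
      using that \<open>a \<le> s\<close> \<open>s \<le> b\<close> \<open>0 \<le> a\<close> by (simp add: mult_nonneg_nonpos)
    ultimately show "\<exists>y. ((\<lambda>s. P s - c * pi * s\<^sup>2) has_real_derivative y) (at s) \<and> y \<le> 0"
      by blast
  qed
  moreover have "f b \<le> f s" "f s \<le> f a" if "s \<in> {a..b}" for s
    using anti that by (auto simp: monotone_on_def)
  ultimately have "P a - f b * pi * a\<^sup>2 \<le> P b - f b * pi * b\<^sup>2"
    and "P b - f a * pi * b\<^sup>2 \<le> P a - f a * pi * a\<^sup>2"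
    by blast+
  then show "f b * (pi * (b\<^sup>2 - a\<^sup>2)) \<le> P b - P a" "P b - P a \<le> f a * (pi * (b\<^sup>2 - a\<^sup>2))"
    by (simp_all add: algebra_simps)
qed

lemma additive_interval_fun_telescope:
  fixes E :: "real \<Rightarrow> real \<Rightarrow> real" and r :: "nat \<Rightarrow> real"
  assumes add: "\<And>x y z. a \<le> x \<Longrightarrow> x \<le> y \<Longrightarrow> y \<le> z \<Longrightarrow> z \<le> b \<Longrightarrow> E x z = E x y + E y z"
    and "r 0 = a" and mono: "\<And>i. r i \<le> r (Suc i)" and range: "\<And>i. i \<le> N \<Longrightarrow> a \<le> r i \<and> r i \<le> b"
  shows "E a (r N) = (\<Sum>i<N. E (r i) (r (Suc i)))"
  using range
proof (induction N)
  case 0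
  have "E a a = E a a + E a a"
    using add[of a a a] 0 \<open>r 0 = a\<close> by force
  then show ?case
    using \<open>r 0 = a\<close> by simp
next
  case (Suc N)
  then show ?case
    using add[of a "r N" "r (Suc N)"] Suc.prems[of N] Suc.prems[of "Suc N"] mono[of N] by simp
qed

lemma additive_interval_fun_eq_zero:
  fixes E :: "real \<Rightarrow> real \<Rightarrow> real" and h :: "real \<Rightarrow> real"
  assumes "a \<le> b"
    and add: "\<And>x y z. a \<le> x \<Longrightarrow> x \<le> y \<Longrightarrow> y \<le> z \<Longrightarrow> z \<le> b \<Longrightarrow> E x z = E x y + E y z"
    and bound: "\<And>x y. a \<le> x \<Longrightarrow> x \<le> y \<Longrightarrow> y \<le> b \<Longrightarrow> \<bar>E x y\<bar> \<le> (h y - h x) * (y - x)"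
  shows "E a b = 0"
proof -
  have uniform_partition: "\<bar>E a b\<bar> \<le> (h b - h a) * (b - a) / real N" if "N > 0" for N :: nat
  proof -
    define r where "r i = a + real i * (b - a) / real N" for i
    have r_step: "r (Suc i) - r i = (b - a) / real N" for i
      by (simp add: r_def add_divide_distrib[symmetric] diff_divide_distrib[symmetric] algebra_simps)
    have "0 \<le> (b - a) / real N"
      using \<open>a \<le> b\<close> by simp
    then have r_mono: "r i \<le> r (Suc i)" for i
      using r_step[of i] by linarith
    have r_range: "a \<le> r i \<and> r i \<le> b" if "i \<le> N" for i
    proof -
      have "real i * (b - a) \<le> real N * (b - a)"
        using that \<open>a \<le> b\<close> by (intro mult_right_mono) auto
      then show ?thesis
        using \<open>N > 0\<close> \<open>a \<le> b\<close> by (simp add: r_def field_simps mult_right_mono)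
    qed
    have r_0: "r 0 = a" and r_N: "r N = b"
      using \<open>N > 0\<close> by (simp_all add: r_def)
    have "\<bar>E a b\<bar> \<le> (\<Sum>i<N. \<bar>E (r i) (r (Suc i))\<bar>)"
      using additive_interval_fun_telescope[where E=E and r=r and a=a and b=b and N=N, OF add r_0 r_mono r_range]
      unfolding r_N
      by (simp add: sum_abs)
    also have "\<dots> \<le> (\<Sum>i<N. (h (r (Suc i)) - h (r i)) * ((b - a) / real N))"
    proof (rule sum_mono)
      fix i assume "i \<in> {..<N}"
      then show "\<bar>E (r i) (r (Suc i))\<bar> \<le> (h (r (Suc i)) - h (r i)) * ((b - a) / real N)"
        using bound[of "r i" "r (Suc i)"] r_range[of i] r_range[of "Suc i"] r_mono[of i]
        by (simp add: r_step)
    qed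
    also have "\<dots> = (\<Sum>i<N. h (r (Suc i)) - h (r i)) * ((b - a) / real N)"
      by (rule sum_distrib_right[symmetric])
    also have "\<dots> = (h b - h a) * (b - a) / real N"
      using sum_lessThan_telescope[of "\<lambda>i. h (r i)" N] by (simp add: r_N r_0)
    finally show ?thesis .
  qed
  have "((\<lambda>N. (h b - h a) * (b - a) / real (Suc N)) \<longlongrightarrow> 0) sequentially"
    by (intro LIMSEQ_Suc[OF lim_const_over_n])
  moreover have "\<forall>\<^sub>F N in sequentially. \<bar>E a b\<bar> \<le> (h b - h a) * (b - a) / real (Suc N)"
    using uniform_partition[OF zero_less_Suc] by (rule always_eventually[OF allI])
  ultimately have "\<bar>E a b\<bar> \<le> 0"
    by (rule tendsto_lowerbound) simp
  then show ?thesis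
    by simp
qed

lemma integral_annulus_radial:
  fixes f P :: "real \<Rightarrow> real"
  assumes cont: "continuous_on {0<..} f" and anti: "antimono_on {0<..} f"
    and deriv: "\<And>s. 0 < s \<Longrightarrow> (P has_real_derivative 2 * pi * s * f s) (at s)"
    and "0 < a" "a \<le> b"
  shows "integral (annulus a b) (\<lambda>y. f (norm y)) = P b - P a"
proof -
  \<comment> \<open>Polar coordinates without a polar change of variables: the error \<open>E\<close> is additive in the
    radii, and integral and primitive obey the same squeeze bounds, so \<open>E\<close> is of second order.\<close>
  define E where "E x y = integral (annulus x y) (\<lambda>y. f (norm y)) - (P y - P x)" for x y
  have sub: "{x..y} \<subseteq> {0<..}" if "a \<le> x" for x y
    using that \<open>0 < a\<close> by auto
  note integral_bounds = integral_annulus_radial_bounds[OF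
      continuous_on_subset[OF cont sub] monotone_on_subset[OF anti sub]]
  have primitive_bounds: "f y * (pi * (y\<^sup>2 - x\<^sup>2)) \<le> P y - P x \<and> P y - P x \<le> f x * (pi * (y\<^sup>2 - x\<^sup>2))"
    if "a \<le> x" "x \<le> y" for x y
    using radial_primitive_bounds[of x y P f] deriv monotone_on_subset[OF anti sub[OF that(1)]] that \<open>0 < a\<close>
    by auto
  have "E a b = 0"
  proof (rule additive_interval_fun_eq_zero[where E=E and a=a and b=b and h="\<lambda>s. - 2 * pi * b * f s"])
    fix x y z assume "a \<le> x" "x \<le> y" "y \<le> z" "z \<le> b"
    then have "integral (annulus x z) (\<lambda>y. f (norm y)) =
        integral (annulus x y) (\<lambda>y. f (norm y)) + integral (annulus y z) (\<lambda>y. f (norm y))"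
      using \<open>0 < a\<close> integral_bounds(1)[of x y] integral_bounds(1)[of y z]
      by (simp flip: annulus_Un(1)[of x y z] add: annulus_Un(2))
    then show "E x z = E x y + E y z"
      by (simp add: E_def)
  next
    fix x y assume "a \<le> x" "x \<le> y" "y \<le> b"
    then have "\<bar>E x y\<bar> \<le> (f x - f y) * (pi * (y\<^sup>2 - x\<^sup>2))"
      using integral_bounds(2,3)[of x y] primitive_bounds[of x y] \<open>0 < a\<close>
      unfolding E_def abs_le_iff left_diff_distrib by linarith
    also have "\<dots> \<le> (f x - f y) * (2 * pi * b * (y - x))"
    proof (rule mult_left_mono)
      have "pi * (y\<^sup>2 - x\<^sup>2) = pi * (y + x) * (y - x)"
        by (simp add: power2_eq_square algebra_simps)
      also have "\<dots> \<le> pi * (2 * b) * (y - x)"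
        using \<open>x \<le> y\<close> \<open>y \<le> b\<close> by (intro mult_right_mono mult_left_mono) auto
      finally show "pi * (y\<^sup>2 - x\<^sup>2) \<le> 2 * pi * b * (y - x)"
        by simp
      show "0 \<le> f x - f y"
        using anti \<open>a \<le> x\<close> \<open>x \<le> y\<close> \<open>0 < a\<close> by (simp add: monotone_on_def)
    qed
    finally show "\<bar>E x y\<bar> \<le> (- 2 * pi * b * f y - - 2 * pi * b * f x) * (y - x)"
      by (simp add: algebra_simps)
  qed fact
  then show ?thesis
    by (simp add: E_def)
qed

lemma integral_punctured_disc_radial:
  fixes f P :: "real \<Rightarrow> real"
  assumes cont: "continuous_on {0<..} f" and anti: "antimono_on {0<..} f"
    and nonneg: "\<And>s. 0 < s \<Longrightarrow> 0 \<le> f s"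
    and deriv: "\<And>s. 0 < s \<Longrightarrow> (P has_real_derivative 2 * pi * s * f s) (at s)"
    and P_cont: "isCont P 0" and "0 < R"
  shows "(\<lambda>y. f (norm y)) integrable_on annulus 0 R"
    and "integral (annulus 0 R) (\<lambda>y. f (norm y)) = P R - P 0"
proof -
  define a where "a k = R / real (Suc k)" for k
  have a_pos: "0 < a k" and a_le: "a k \<le> R" and a_decr: "a (Suc k) \<le> a k" for k
    using \<open>0 < R\<close> by (auto simp: a_def field_simps)
  have a_lim: "a \<longlonglongrightarrow> 0"
    unfolding a_def using LIMSEQ_Suc[OF lim_const_over_n[of R]] by simp
  define g where "g k y = (if y \<in> annulus (a k) R then f (norm y) else 0)" for k y
  have inner: "annulus (a k) R \<inter> annulus 0 R = annulus (a k) R" for k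
    using a_pos[of k] by (auto simp: annulus_def)
  have g_int: "g k integrable_on annulus 0 R" for k
    unfolding g_def integrable_restrict_Int inner
    by (rule integral_annulus_radial_bounds(1))
       (use a_pos[of k] a_le[of k] in \<open>auto intro: continuous_on_subset[OF cont] monotone_on_subset[OF anti]\<close>)
  have g_integral: "integral (annulus 0 R) (g k) = P R - P (a k)" for k
    unfolding g_def integral_restrict_Int inner
    by (rule integral_annulus_radial[OF cont anti deriv a_pos a_le])
  have "(\<lambda>k. P R - P (a k)) \<longlonglongrightarrow> P R - P 0"
    by (intro tendsto_diff tendsto_const isCont_tendsto_compose[OF P_cont a_lim])
  then have lim: "(\<lambda>k. integral (annulus 0 R) (g k)) \<longlonglongrightarrow> P R - P 0"
    by (simp add: g_integral)
  have "(\<lambda>y. f (norm y)) integrable_on annulus 0 R \<and>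
      (\<lambda>k. integral (annulus 0 R) (g k)) \<longlonglongrightarrow> integral (annulus 0 R) (\<lambda>y. f (norm y))"
  proof (rule monotone_convergence_increasing[OF g_int])
    show "g k y \<le> g (Suc k) y" if "y \<in> annulus 0 R" for k y
      using that a_decr[of k] nonneg[of "norm y"] by (auto simp: g_def annulus_def)
    show "(\<lambda>k. g k y) \<longlonglongrightarrow> f (norm y)" if "y \<in> annulus 0 R" for y
    proof (rule tendsto_eventually)
      have "\<forall>\<^sub>F k in sequentially. a k < norm y"
        using that order_tendstoD(2)[OF a_lim] by (auto simp: annulus_def)
      then show "\<forall>\<^sub>F k in sequentially. g k y = f (norm y)"
        by eventually_elim (use that in \<open>auto simp: g_def annulus_def\<close>)
    qed
    show "bounded (range (\<lambda>k. integral (annulus 0 R) (g k)))"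
      using lim by (intro convergent_imp_bounded) (auto simp: convergent_def)
  qed
  then show "(\<lambda>y. f (norm y)) integrable_on annulus 0 R"
    and "integral (annulus 0 R) (\<lambda>y. f (norm y)) = P R - P 0"
    using lim LIMSEQ_unique by blast+
qed

lemma integral_punctured_disc_kernel:
  assumes "0 < \<eta>" "0 < R"
  shows "(\<lambda>y. 1 / (norm y * (\<eta>\<^sup>2 + 4 * (norm y)\<^sup>2))) integrable_on annulus 0 R"
    and "integral (annulus 0 R) (\<lambda>y. 1 / (norm y * (\<eta>\<^sup>2 + 4 * (norm y)\<^sup>2))) = pi / \<eta> * arctan (2 * R / \<eta>)"
proof -
  define f where "f s = 1 / (s * (\<eta>\<^sup>2 + 4 * s\<^sup>2))" for s :: real
  define P where "P s = pi / \<eta> * arctan (2 * s / \<eta>)" for s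
  have denom_pos: "0 < \<eta>\<^sup>2 + 4 * s\<^sup>2" for s :: real
    using \<open>0 < \<eta>\<close> by (intro add_pos_nonneg) auto
  have "continuous_on {0<..} f"
    unfolding f_def using denom_pos by (intro continuous_intros) (auto simp: less_imp_neq[symmetric])
  moreover have "antimono_on {0<..} f"
  proof (rule monotone_onI)
    fix s t :: real assume "s \<in> {0<..}" "s \<le> t"
    then have "s * (\<eta>\<^sup>2 + 4 * s\<^sup>2) \<le> t * (\<eta>\<^sup>2 + 4 * t\<^sup>2)"
      by (intro mult_mono add_left_mono mult_left_mono power_mono) auto
    then show "f t \<le> f s"
      unfolding f_def using \<open>s \<in> {0<..}\<close> \<open>s \<le> t\<close> denom_pos by (intro divide_left_mono mult_pos_pos) auto
  qed
  moreover have "0 \<le> f s" if "0 < s" for s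
    using that denom_pos[of s] by (simp add: f_def)
  moreover have "(P has_real_derivative 2 * pi * s * f s) (at s)" if "0 < s" for s
  proof -
    have "(P has_real_derivative pi / \<eta> * (inverse (1 + (2 * s / \<eta>)\<^sup>2) * (2 / \<eta>))) (at s)"
      unfolding P_def using \<open>0 < \<eta>\<close> by (auto intro!: derivative_eq_intros)
    moreover have "pi / \<eta> * (inverse (1 + (2 * s / \<eta>)\<^sup>2) * (2 / \<eta>)) = 2 * pi / (\<eta>\<^sup>2 + 4 * s\<^sup>2)"
      using \<open>0 < \<eta>\<close> denom_pos[of s] by (simp add: field_simps power2_eq_square)
    moreover have "2 * pi / (\<eta>\<^sup>2 + 4 * s\<^sup>2) = 2 * pi * s * f s"
      using that by (simp add: f_def)
    ultimately show ?thesis by simp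
  qed
  moreover have "isCont P 0"
    unfolding P_def using \<open>0 < \<eta>\<close> by (intro continuous_intros) auto
  ultimately show "(\<lambda>y. 1 / (norm y * (\<eta>\<^sup>2 + 4 * (norm y)\<^sup>2))) integrable_on annulus 0 R"
    and "integral (annulus 0 R) (\<lambda>y. 1 / (norm y * (\<eta>\<^sup>2 + 4 * (norm y)\<^sup>2))) = pi / \<eta> * arctan (2 * R / \<eta>)"
    using integral_punctured_disc_radial[of f P R] \<open>0 < R\<close> by (simp_all add: f_def P_def)
qed

section \<open>Symmetrisation under a quarter turn\<close>

lemma norm_vec2_sq: "(norm (y :: real^2))\<^sup>2 = (y$1)\<^sup>2 + (y$2)\<^sup>2"
  by (simp add: norm_vec_def L2_set_def sum_2)

lemma inner_vec2: "(y :: real^2) \<bullet> v = y$1 * v$1 + y$2 * v$2"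
  by (simp add: inner_vec_def sum_2)

definition lin_integrand :: "real \<Rightarrow> real^2 \<Rightarrow> real^2 \<Rightarrow> real" where
  "lin_integrand \<eta> v y = ((norm y * norm v)\<^sup>2 - (y \<bullet> v)\<^sup>2) / (norm y ^ 3 * (\<eta>\<^sup>2 + 4 * (norm y)\<^sup>2))"

definition rot90 :: "real^2^2" where
  "rot90 = vector [vector [0, -1], vector [1, 0]]"

lemma rot90_apply: "(rot90 *v y) $ 1 = - y $ 2" "(rot90 *v y) $ 2 = y $ 1"
  by (simp_all add: rot90_def matrix_vector_mult_def sum_2)

lemma norm_rot90: "norm (rot90 *v y) = norm y"
  by (simp add: norm_eq_sqrt_inner inner_vec2 rot90_apply algebra_simps)

lemma invertible_rot90: "invertible rot90"
  by (simp add: invertible_det_nz det_2 rot90_def)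

lemma det_rot90: "det rot90 = 1"
  by (simp add: det_2 rot90_def)

lemma inner_sq_add_inner_rot90_sq: "(y \<bullet> v)\<^sup>2 + ((rot90 *v y) \<bullet> v)\<^sup>2 = (norm y * norm v)\<^sup>2"
  unfolding power_mult_distrib norm_vec2_sq inner_vec2 rot90_apply
  by (simp add: power2_eq_square algebra_simps)

lemma lin_integrand_nonneg: "0 \<le> lin_integrand \<eta> v y"
proof -
  have "(y \<bullet> v)\<^sup>2 \<le> (norm y * norm v)\<^sup>2"
    using Cauchy_Schwarz_ineq[of y v] by (simp add: power_mult_distrib power2_norm_eq_inner)
  then show ?thesis
    by (simp add: lin_integrand_def)
qed

lemma lin_integrand_add_rot90:
  "lin_integrand \<eta> v y + lin_integrand \<eta> v (rot90 *v y) = (norm v)\<^sup>2 * (1 / (norm y * (\<eta>\<^sup>2 + 4 * (norm y)\<^sup>2)))"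
proof (cases "y = 0")
  case False
  have "((norm y * norm v)\<^sup>2 - (y \<bullet> v)\<^sup>2) + ((norm y * norm v)\<^sup>2 - ((rot90 *v y) \<bullet> v)\<^sup>2)
      = (norm y * norm v)\<^sup>2"
    using inner_sq_add_inner_rot90_sq[of y v] by linarith
  then have "lin_integrand \<eta> v y + lin_integrand \<eta> v (rot90 *v y)
      = (norm y * norm v)\<^sup>2 / (norm y ^ 3 * (\<eta>\<^sup>2 + 4 * (norm y)\<^sup>2))"
    unfolding lin_integrand_def norm_rot90 add_divide_distrib[symmetric] by simp
  also have "\<dots> = (norm y)\<^sup>2 * (norm v)\<^sup>2 / ((norm y)\<^sup>2 * (norm y * (\<eta>\<^sup>2 + 4 * (norm y)\<^sup>2)))"
    by (simp add: power_mult_distrib power2_eq_square power3_eq_cube mult.assoc)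
  finally show ?thesis
    using False by simp
qed (simp add: lin_integrand_def)

lemma integral_punctured_disc_lin_integrand:
  assumes "0 < \<eta>" "0 < R"
  shows "lin_integrand \<eta> v absolutely_integrable_on annulus 0 R"
    and "integral (annulus 0 R) (lin_integrand \<eta> v) = (norm v)\<^sup>2 / 2 * (pi / \<eta> * arctan (2 * R / \<eta>))"
proof -
  let ?G = "lin_integrand \<eta> v" and ?A = "annulus 0 R"
  have kernel_int: "(\<lambda>y. (norm v)\<^sup>2 * (1 / (norm y * (\<eta>\<^sup>2 + 4 * (norm y)\<^sup>2)))) integrable_on ?A"
    using integral_punctured_disc_kernel(1)[OF assms] by (rule integrable_on_mult_right)
  have "0 < \<eta>\<^sup>2 + 4 * s\<^sup>2" for s :: real
    using \<open>0 < \<eta>\<close> by (intro add_pos_nonneg) auto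
  then have "continuous_on ?A ?G"
    unfolding lin_integrand_def
    by (intro continuous_intros) (auto simp: annulus_def less_imp_neq[symmetric])
  then have G_int: "?G integrable_on ?A"
  proof (intro measurable_bounded_by_integrable_imp_integrable_real[OF _ kernel_int]
      continuous_imp_measurable_on_sets_lebesgue)
    show "\<bar>?G y\<bar> \<le> (norm v)\<^sup>2 * (1 / (norm y * (\<eta>\<^sup>2 + 4 * (norm y)\<^sup>2)))" for y
      using lin_integrand_add_rot90[of \<eta> v y] lin_integrand_nonneg[of \<eta> v y]
        lin_integrand_nonneg[of \<eta> v "rot90 *v y"] by simp
  qed (use lmeasurable_annulus in auto)
  then show G_abs: "?G absolutely_integrable_on ?A"
    using lin_integrand_nonneg by (intro nonnegative_absolutely_integrable_1) auto
  have "{y. rot90 *v (y - 0) \<in> ?A} = ?A"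
    unfolding annulus_def diff_zero mem_Collect_eq norm_rot90 by (rule refl)
  note rotated = integral_affine_preimage[OF invertible_rot90 _ G_abs, of 0, unfolded this]
  have "2 * integral ?A ?G = integral ?A (\<lambda>y. ?G y + ?G (rot90 *v y))"
    using rotated lmeasurable_annulus G_int
    by (simp add: integral_add set_lebesgue_integral_eq_integral(1) det_rot90)
  also have "\<dots> = (norm v)\<^sup>2 * integral ?A (\<lambda>y. 1 / (norm y * (\<eta>\<^sup>2 + 4 * (norm y)\<^sup>2)))"
    unfolding lin_integrand_add_rot90 by (rule Henstock_Kurzweil_Integration.integral_mult_right)
  finally show "integral ?A ?G = (norm v)\<^sup>2 / 2 * (pi / \<eta> * arctan (2 * R / \<eta>))"
    unfolding integral_punctured_disc_kernel(2)[OF assms] by (simp add: field_simps)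
qed

section \<open>The linearized integral\<close>

lemma negligible_ball_annulus_diff: "negligible ((ball 0 R - annulus 0 R) \<union> (annulus 0 R - ball 0 R))"
proof (rule negligible_subset)
  show "negligible ({0::real^2} \<union> sphere 0 R)"
    using negligible_sphere by auto
  show "(ball 0 R - annulus 0 R) \<union> (annulus 0 R - ball 0 R) \<subseteq> {0::real^2} \<union> sphere 0 R"
    by (auto simp: annulus_def)
qed

lemma integral_ball_eq_annulus:
  fixes F :: "real^2 \<Rightarrow> real"
  shows "integral (ball 0 R) F = integral (annulus 0 R) F"
  by (rule integral_spike_set) (auto intro: negligible_subset[OF negligible_ball_annulus_diff])

lemma absolutely_integrable_on_ball_if_annulus:
  fixes F :: "real^2 \<Rightarrow> real"
  shows "F absolutely_integrable_on annulus 0 R \<Longrightarrow> F absolutely_integrable_on ball 0 R"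
  by (erule absolutely_integrable_spike_set)
     (auto intro: negligible_subset[OF negligible_ball_annulus_diff])

lemma deriv2_norm_along_line:
  fixes y v :: "'a::real_inner"
  assumes "y \<noteq> 0"
  shows "deriv (deriv (\<lambda>t. norm (y + t *\<^sub>R v))) 0 = ((norm y * norm v)\<^sup>2 - (y \<bullet> v)\<^sup>2) / norm y ^ 3"
proof -
  define p where "p t = (norm y)\<^sup>2 + 2 * t * (y \<bullet> v) + t\<^sup>2 * (norm v)\<^sup>2" for t
  define q where "q t = y \<bullet> v + t * (norm v)\<^sup>2" for t
  have norm_eq: "norm (y + t *\<^sub>R v) = sqrt (p t)" for t
    by (simp add: p_def norm_eq_sqrt_inner inner_add inner_commute power2_eq_square algebra_simps)
  have p0: "p 0 > 0"
    using assms by (simp add: p_def)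
  have dp: "(p has_real_derivative 2 * q t) (at t)" for t
    unfolding p_def q_def by (auto intro!: derivative_eq_intros simp: algebra_simps)
  have d_sqrt: "((\<lambda>t. sqrt (p t)) has_real_derivative q t / sqrt (p t)) (at t)" if "p t > 0" for t
    using that by (auto intro!: derivative_eq_intros dp simp: field_simps)
  have "open {t. 0 < p t}"
    unfolding p_def by (intro open_Collect_less continuous_intros)
  then have "\<forall>\<^sub>F t in nhds 0. p t > 0"
    using p0 eventually_nhds_in_open by fastforce
  then have "\<forall>\<^sub>F t in nhds 0. deriv (\<lambda>t. sqrt (p t)) t = q t / sqrt (p t)"
    by eventually_elim (use d_sqrt DERIV_imp_deriv in blast)
  then have "deriv (deriv (\<lambda>t. sqrt (p t))) 0 = deriv (\<lambda>t. q t / sqrt (p t)) 0"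
    by (rule deriv_cong_ev) simp
  also have "\<dots> = ((norm v)\<^sup>2 * sqrt (p 0) - q 0 * (q 0 / sqrt (p 0))) / (sqrt (p 0) * sqrt (p 0))"
    using p0 by (intro DERIV_imp_deriv DERIV_divide d_sqrt) (auto simp: q_def intro!: derivative_eq_intros)
  also have "\<dots> = ((norm y * norm v)\<^sup>2 - (y \<bullet> v)\<^sup>2) / norm y ^ 3"
    using p0 assms by (simp add: p_def q_def field_simps power2_eq_square power3_eq_cube)
  finally show ?thesis
    by (simp add: norm_eq)
qed

lemma partial2_norm_affine:
  fixes S :: "real^2^2" and k w :: "real^2" and j :: 2
  defines "y \<equiv> S *v (k - w)" and "v \<equiv> S *v axis j 1"
  assumes "y \<noteq> 0"
  shows "partial2 (\<lambda>q. norm (S *v (q - w))) j k = ((norm y * norm v)\<^sup>2 - (y \<bullet> v)\<^sup>2) / norm y ^ 3"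
proof -
  have "S *v (k + t *\<^sub>R axis j 1 - w) = y + t *\<^sub>R v" for t
    unfolding y_def v_def
    by (simp add: algebra_simps matrix_vector_right_distrib matrix_vector_mult_scaleR)
  then show ?thesis
    unfolding partial2_def using deriv2_norm_along_line[OF \<open>y \<noteq> 0\<close>] by simp
qed

lemma lin_integral_closed_form:
  fixes S :: "real^2^2" and j :: 2
  assumes S: "invertible S" and "0 < \<epsilon>" "0 < \<eta>"
  shows "lin_integral S w \<epsilon> j \<eta> = ((S$1$j)\<^sup>2 + (S$2$j)\<^sup>2) * pi * arctan (\<epsilon> / \<eta>) / (2 * \<bar>det S\<bar>)"
proof -
  define v where "v = S *v axis j 1"
  define G where "G = lin_integrand \<eta> v"
  define B where "B = ball (0::real^2) (\<epsilon> / 2)"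
  have norm_v: "(norm v)\<^sup>2 = (S$1$j)\<^sup>2 + (S$2$j)\<^sup>2"
    by (simp add: v_def norm_vec2_sq matrix_vector_mult_basis column_def)
  have G_abs: "G absolutely_integrable_on B"
    unfolding B_def G_def using \<open>0 < \<epsilon>\<close> \<open>0 < \<eta>\<close>
    by (intro absolutely_integrable_on_ball_if_annulus integral_punctured_disc_lin_integrand(1)) auto
  have G_integral: "integral B G = (norm v)\<^sup>2 / 2 * (pi / \<eta> * arctan (\<epsilon> / \<eta>))"
    unfolding B_def G_def integral_ball_eq_annulus
    using integral_punctured_disc_lin_integrand(2)[of \<eta> "\<epsilon> / 2" v] \<open>0 < \<epsilon>\<close> \<open>0 < \<eta>\<close> by simp
  obtain S' where "S' ** S = mat 1"
    using S invertible_def by blast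
  then have "S' *v (S *v x) = x" for x
    by (simp add: matrix_vector_mul_assoc)
  then have S_nz: "S *v (k - w) \<noteq> 0" if "k \<noteq> w" for k
    using that by (metis matrix_vector_mult_0_right right_minus_eq)
  have domain: "{k. 2 * norm (S *v (k - w)) < \<epsilon>} = {k. S *v (k - w) \<in> B}"
    by (auto simp: B_def)
  \<comment> \<open>at \<open>k = w\<close> the value of \<open>partial2\<close> is junk, but \<open>{w}\<close> is null\<close>
  have "integral {k. 2 * norm (S *v (k - w)) < \<epsilon>}
        (\<lambda>k. partial2 (\<lambda>q. norm (S *v (q - w))) j k / (\<eta>\<^sup>2 + 4 * (norm (S *v (k - w)))\<^sup>2))
      = integral {k. S *v (k - w) \<in> B} (\<lambda>k. G (S *v (k - w)))"
    unfolding domain by (rule integral_spike[of "{w}"])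
       (auto simp: B_def G_def v_def lin_integrand_def partial2_norm_affine S_nz power3_eq_cube power2_eq_square mult.assoc)
  also have "\<dots> = integral B G / \<bar>det S\<bar>"
    using integral_affine_preimage(2)[OF S _ G_abs] by (simp add: B_def)
  finally show ?thesis
    using \<open>0 < \<eta>\<close> by (simp add: lin_integral_def G_integral norm_v)
qed

lemma lin_integral_tendsto:
  fixes S :: "real^2^2" and j :: 2
  assumes "invertible S" and "0 < \<epsilon>"
  shows "(lin_integral S w \<epsilon> j \<longlongrightarrow> ((S$1$j)\<^sup>2 + (S$2$j)\<^sup>2) * pi\<^sup>2 / (4 * \<bar>det S\<bar>)) (at_right 0)"
proof -
  define c where "c = ((S$1$j)\<^sup>2 + (S$2$j)\<^sup>2) * pi / (2 * \<bar>det S\<bar>)"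
  have "filterlim (\<lambda>\<eta>. \<epsilon> / \<eta>) at_top (at_right 0)"
    using filterlim_tendsto_pos_mult_at_top[OF tendsto_const \<open>0 < \<epsilon>\<close> filterlim_inverse_at_top_right]
    by (simp add: divide_inverse)
  then have lim: "((\<lambda>\<eta>. c * arctan (\<epsilon> / \<eta>)) \<longlongrightarrow> c * (pi / 2)) (at_right 0)"
    by (intro tendsto_mult_left filterlim_compose[OF tendsto_arctan_at_top])
  have limit_value: "c * (pi / 2) = ((S$1$j)\<^sup>2 + (S$2$j)\<^sup>2) * pi\<^sup>2 / (4 * \<bar>det S\<bar>)"
    by (simp add: c_def power2_eq_square)
  have "\<forall>\<^sub>F \<eta> in at_right 0. c * arctan (\<epsilon> / \<eta>) = lin_integral S w \<epsilon> j \<eta>"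
    using assms by (intro eventually_at_rightI[of 0 1]) (auto simp: lin_integral_closed_form c_def)
  then show ?thesis
    by (rule tendsto_cong[THEN iffD1, OF _ lim[unfolded limit_value]])
qed

theorem mainTheorem11:
  shows "(\<forall>(S::real^2^2) (w::real^2) (\<epsilon>::real) (j::2).
            invertible S \<longrightarrow> \<epsilon> > 0 \<longrightarrow>
            ((\<lambda>\<eta>. 1 / (2 * pi)\<^sup>2 * lin_integral S w \<epsilon> j \<eta>) \<longlongrightarrow>
               ((S $ 1 $ j)\<^sup>2 + (S $ 2 $ j)\<^sup>2) / (16 * \<bar>det S\<bar>)) (at_right 0))
       \<and> (\<forall>(n::nat) (Sl::nat \<Rightarrow> real^2^2) (wl::nat \<Rightarrow> real^2) (\<epsilon>::real) (j::2) (\<sigma>::real).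
            (\<forall>l\<in>{1..n}. invertible (Sl l)) \<longrightarrow> \<epsilon> > 0 \<longrightarrow>
            \<sigma> = 1 / (2 * pi)\<^sup>2 * (\<Sum>l=1..n. Lim (at_right 0) (lin_integral (Sl l) (wl l) \<epsilon> j)) \<longrightarrow>
            \<sigma> = 1 / 16 * (\<Sum>l=1..n. ((Sl l $ 1 $ j)\<^sup>2 + (Sl l $ 2 $ j)\<^sup>2) / \<bar>det (Sl l)\<bar>))"
proof -
  have scale: "1 / (2 * pi)\<^sup>2 * (c * pi\<^sup>2 / (4 * d)) = c / (16 * d)" for c d :: real
    by (simp add: power2_eq_square field_simps)
  show ?thesis
  proof (intro conjI allI impI)
    fix S :: "real^2^2" and w :: "real^2" and \<epsilon> :: real and j :: 2
    assume "invertible S" "\<epsilon> > 0"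
    from tendsto_mult_left[OF lin_integral_tendsto[OF this, of w j], where c="1 / (2 * pi)\<^sup>2"]
    show "((\<lambda>\<eta>. 1 / (2 * pi)\<^sup>2 * lin_integral S w \<epsilon> j \<eta>) \<longlongrightarrow>
        ((S $ 1 $ j)\<^sup>2 + (S $ 2 $ j)\<^sup>2) / (16 * \<bar>det S\<bar>)) (at_right 0)"
      unfolding scale .
  next
    fix n :: nat and Sl :: "nat \<Rightarrow> real^2^2" and wl :: "nat \<Rightarrow> real^2" and \<epsilon> :: real and j :: 2 and \<sigma> :: real
    assume inv: "\<forall>l\<in>{1..n}. invertible (Sl l)" and "\<epsilon> > 0"
      and \<sigma>: "\<sigma> = 1 / (2 * pi)\<^sup>2 * (\<Sum>l=1..n. Lim (at_right 0) (lin_integral (Sl l) (wl l) \<epsilon> j))"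
    have "Lim (at_right 0) (lin_integral (Sl l) (wl l) \<epsilon> j) =
        ((Sl l $ 1 $ j)\<^sup>2 + (Sl l $ 2 $ j)\<^sup>2) * pi\<^sup>2 / (4 * \<bar>det (Sl l)\<bar>)" if "l \<in> {1..n}" for l
      using inv that \<open>\<epsilon> > 0\<close> by (intro tendsto_Lim lin_integral_tendsto) auto
    then show "\<sigma> = 1 / 16 * (\<Sum>l=1..n. ((Sl l $ 1 $ j)\<^sup>2 + (Sl l $ 2 $ j)\<^sup>2) / \<bar>det (Sl l)\<bar>)"
      by (simp add: \<sigma> sum_distrib_left scale)
  qed
qed

end
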